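(* For every $n>1$, the logics $\mathrm{Log}_{=1}(\mathbb{R})$ and $\mathrm{Log}_{=1}(\mathbb{R}^n)$ are incomparable under inclusion (neither contains the other).
   Context: Modal formulas are built from a countable set of propositional variables using $\bot$, $\to$ and one unary modality $\lozenge$. A frame is a pair $(X,R)$; a valuation assigns subsets of $X$ to variables; $x\models\lozenge\varphi$ iff there is $y$ with $xRy$ and $y\models\varphi$. A formula is valid in a frame if true at every point under every valuation. For a metric space $(X,d)$, $\mathrm{Log}_{=1}(X)$ is the set of modal formulas valid in the frame $(X,R_{=1})$, where $xR_{=1}y$ iff $d(x,y)=1$. $\mathbb{R}^n$ carries the Euclidean metric. *)

theory Defs
  imports "HOL-Analysis.Analysis"
begin

datatype fm = Var nat | Bot | Imp fm fm | Dia fm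

fun sat :: "'a set \<Rightarrow> ('a \<Rightarrow> 'a \<Rightarrow> bool) \<Rightarrow> (nat \<Rightarrow> 'a set) \<Rightarrow> 'a \<Rightarrow> fm \<Rightarrow> bool" where
  "sat X R V x (Var p) = (x \<in> V p)"
| "sat X R V x Bot = False"
| "sat X R V x (Imp a b) = (sat X R V x a \<longrightarrow> sat X R V x b)"
| "sat X R V x (Dia a) = (\<exists>y\<in>X. R x y \<and> sat X R V y a)"

definition valuation :: "'a set \<Rightarrow> (nat \<Rightarrow> 'a set) \<Rightarrow> bool" where
  "valuation X V = (\<forall>p. V p \<subseteq> X)"

definition valid_in_frame :: "'a set \<Rightarrow> ('a \<Rightarrow> 'a \<Rightarrow> bool) \<Rightarrow> fm \<Rightarrow> bool" where
  "valid_in_frame X R \<phi> = (\<forall>V. valuation X V \<longrightarrow> (\<forall>x\<in>X. sat X R V x \<phi>))"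

definition Log_eq1 :: "'a::metric_space set \<Rightarrow> fm set" where
  "Log_eq1 X = {\<phi>. valid_in_frame X (\<lambda>x y. dist x y = 1) \<phi>}"

end

theory Submission
  imports Defs
begin

(* Each inclusion is refuted by a formula whose validity on a frame is a first-order property
   of the frame.  In (R, R_{=1}) a point x has only the two neighbours x - 1 and x + 1, while in
   R^n, n >= 2, the unit sphere around a point has at least three points.  Conversely, in R^n any
   two points at distance 1 are the base of an equilateral triangle: by connectedness of the
   sphere of radius 1 around x, the distance to y takes every value between 0 and 2 on it.  In R
   the points 0 and 1 have no common neighbour. *)

definition Not_fm :: "fm \<Rightarrow> fm" where "Not_fm a = Imp a Bot"
definition And_fm :: "fm \<Rightarrow> fm \<Rightarrow> fm" where "And_fm a b = Not_fm (Imp a (Not_fm b))"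
definition Or_fm :: "fm \<Rightarrow> fm \<Rightarrow> fm" where "Or_fm a b = Imp (Not_fm a) b"

lemma sat_Not_fm [simp]: "sat X R V x (Not_fm a) \<longleftrightarrow> \<not> sat X R V x a"
  and sat_And_fm [simp]: "sat X R V x (And_fm a b) \<longleftrightarrow> sat X R V x a \<and> sat X R V x b"
  and sat_Or_fm [simp]: "sat X R V x (Or_fm a b) \<longleftrightarrow> sat X R V x a \<or> sat X R V x b"
  by (auto simp: Not_fm_def And_fm_def Or_fm_def)

definition at_most_two_successors :: "'a set \<Rightarrow> ('a \<Rightarrow> 'a \<Rightarrow> bool) \<Rightarrow> bool" where
  "at_most_two_successors X R \<longleftrightarrow>
     (\<forall>x\<in>X. \<forall>y1\<in>X. \<forall>y2\<in>X. \<forall>y3\<in>X. R x y1 \<and> R x y2 \<and> R x y3 \<longrightarrow> y1 = y2 \<or> y1 = y3 \<or> y2 = y3)"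

definition at_most_two_successors_fm :: fm where
  "at_most_two_successors_fm =
     Imp (And_fm (Dia (Var 0)) (And_fm (Dia (Var 1)) (Dia (Var 2))))
       (Or_fm (Dia (And_fm (Var 0) (Var 1)))
         (Or_fm (Dia (And_fm (Var 0) (Var 2))) (Dia (And_fm (Var 1) (Var 2)))))"

lemma valid_at_most_two_successors_fm_iff:
  "valid_in_frame X R at_most_two_successors_fm \<longleftrightarrow> at_most_two_successors X R"
proof
  assume valid: "valid_in_frame X R at_most_two_successors_fm"
  show "at_most_two_successors X R"
    unfolding at_most_two_successors_def
  proof (intro ballI impI)
    fix x y1 y2 y3 assume "x \<in> X" "y1 \<in> X" "y2 \<in> X" "y3 \<in> X" and "R x y1 \<and> R x y2 \<and> R x y3"
    moreover define V where "V = (\<lambda>k::nat. if k = 0 then {y1} else if k = 1 then {y2} else {y3})"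
    moreover have "valuation X V"
      using \<open>y1 \<in> X\<close> \<open>y2 \<in> X\<close> \<open>y3 \<in> X\<close> by (simp add: valuation_def V_def)
    ultimately have "sat X R V x at_most_two_successors_fm"
      using valid by (simp add: valid_in_frame_def)
    then show "y1 = y2 \<or> y1 = y3 \<or> y2 = y3"
      using \<open>R x y1 \<and> R x y2 \<and> R x y3\<close> \<open>y1 \<in> X\<close> \<open>y2 \<in> X\<close> \<open>y3 \<in> X\<close>
      by (auto simp: at_most_two_successors_fm_def V_def)
  qed
next
  assume two: "at_most_two_successors X R"
  show "valid_in_frame X R at_most_two_successors_fm"
    unfolding valid_in_frame_def
  proof (intro allI impI ballI)
    fix V x assume "x \<in> X"
    have "y0 = y1 \<or> y0 = y2 \<or> y1 = y2"
      if "y0 \<in> X" "y1 \<in> X" "y2 \<in> X" "R x y0" "R x y1" "R x y2" for y0 y1 y2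
      using two \<open>x \<in> X\<close> that unfolding at_most_two_successors_def by blast
    then show "sat X R V x at_most_two_successors_fm"
      by (simp add: at_most_two_successors_fm_def) blast
  qed
qed

definition edges_in_triangles :: "'a set \<Rightarrow> ('a \<Rightarrow> 'a \<Rightarrow> bool) \<Rightarrow> bool" where
  "edges_in_triangles X R \<longleftrightarrow> (\<forall>x\<in>X. \<forall>y\<in>X. R x y \<longrightarrow> (\<exists>z\<in>X. R x z \<and> R z x \<and> R z y))"

definition edges_in_triangles_fm :: fm where
  "edges_in_triangles_fm = Imp (And_fm (Var 0) (Dia (Var 1))) (Dia (And_fm (Dia (Var 0)) (Dia (Var 1))))"

lemma valid_edges_in_triangles_fm_iff:
  "valid_in_frame X R edges_in_triangles_fm \<longleftrightarrow> edges_in_triangles X R"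
proof
  assume valid: "valid_in_frame X R edges_in_triangles_fm"
  show "edges_in_triangles X R"
    unfolding edges_in_triangles_def
  proof (intro ballI impI)
    fix x y assume "x \<in> X" "y \<in> X" "R x y"
    moreover define V where "V = (\<lambda>k::nat. if k = 0 then {x} else {y})"
    moreover have "valuation X V"
      using \<open>x \<in> X\<close> \<open>y \<in> X\<close> by (simp add: valuation_def V_def)
    ultimately have "sat X R V x edges_in_triangles_fm"
      using valid by (simp add: valid_in_frame_def)
    then show "\<exists>z\<in>X. R x z \<and> R z x \<and> R z y"
      using \<open>R x y\<close> \<open>y \<in> X\<close> by (auto simp: edges_in_triangles_fm_def V_def)
  qed
next
  assume "edges_in_triangles X R"
  then show "valid_in_frame X R edges_in_triangles_fm"
    unfolding valid_in_frame_def edges_in_triangles_def edges_in_triangles_fm_def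
    by fastforce
qed

abbreviation unit_distance :: "'a::metric_space \<Rightarrow> 'a \<Rightarrow> bool" where
  "unit_distance x y \<equiv> dist x y = 1"

lemma at_most_two_successors_real: "at_most_two_successors (UNIV :: real set) unit_distance"
  by (auto simp: at_most_two_successors_def dist_real_def abs_if)

lemma not_at_most_two_successors_euclidean:
  assumes "2 \<le> DIM('a::euclidean_space)"
  shows "\<not> at_most_two_successors (UNIV :: 'a set) unit_distance"
proof -
  have "\<not> card (Basis :: 'a set) \<le> Suc 0"
    using assms by simp
  then obtain i j :: 'a where ij: "i \<in> Basis" "j \<in> Basis" "i \<noteq> j"
    by (auto simp: card_le_Suc0_iff_eq)
  have "inner i i = 1" "inner i (- i) = - 1" "inner i j = 0"
    using ij by (simp_all add: inner_Basis)
  then have "i \<noteq> - i" "i \<noteq> j" "- i \<noteq> j"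
    by force+
  moreover have "unit_distance 0 i" "unit_distance 0 (- i)" "unit_distance 0 j"
    using ij by (auto simp: dist_norm)
  ultimately show ?thesis
    unfolding at_most_two_successors_def by blast
qed

lemma not_edges_in_triangles_real: "\<not> edges_in_triangles (UNIV :: real set) unit_distance"
proof -
  have "\<nexists>z::real. unit_distance z 0 \<and> unit_distance z 1"
    by (auto simp: dist_real_def abs_if)
  moreover have "unit_distance (0::real) 1"
    by simp
  ultimately show ?thesis
    unfolding edges_in_triangles_def by blast
qed

lemma equilateral_triangle_apex:
  fixes x y :: "'a::euclidean_space"
  assumes "2 \<le> DIM('a)" and "dist x y = r"
  shows "\<exists>z. dist x z = r \<and> dist y z = r"
proof -
  let ?f = "\<lambda>z. dist y z"
  have "connected (?f ` sphere x r)"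
    using assms(1) by (intro connected_continuous_image connected_sphere continuous_intros)
  moreover have "?f y = 0" "y \<in> sphere x r"
    using assms(2) by auto
  moreover have "?f (2 *\<^sub>R x - y) = norm (2 *\<^sub>R (y - x))" "dist x (2 *\<^sub>R x - y) = norm (y - x)"
    by (simp_all add: dist_norm algebra_simps scaleR_2)
  then have "?f (2 *\<^sub>R x - y) = 2 * r" "2 *\<^sub>R x - y \<in> sphere x r"
    using assms(2) by (simp_all add: dist_norm norm_minus_commute)
  ultimately have "{0..2 * r} \<subseteq> ?f ` sphere x r"
    by (metis connected_contains_Icc image_eqI)
  moreover have "r \<in> {0..2 * r}"
    using assms(2) by auto
  ultimately have "r \<in> ?f ` sphere x r"
    by blast
  then show ?thesis
    by auto
qed

lemma edges_in_triangles_euclidean: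
  assumes "2 \<le> DIM('a::euclidean_space)"
  shows "edges_in_triangles (UNIV :: 'a set) unit_distance"
  unfolding edges_in_triangles_def
proof (intro ballI impI)
  fix x y :: 'a
  assume "unit_distance x y"
  then obtain z where "unit_distance x z" "unit_distance y z"
    using equilateral_triangle_apex[OF assms] by blast
  then show "\<exists>z\<in>UNIV. unit_distance x z \<and> unit_distance z x \<and> unit_distance z y"
    by (auto simp: dist_commute)
qed

theorem proposition3p10:
  assumes "CARD('n::finite) > 1"
  shows "\<not> Log_eq1 (UNIV :: real set) \<subseteq> Log_eq1 (UNIV :: (real ^ 'n) set)
       \<and> \<not> Log_eq1 (UNIV :: (real ^ 'n) set) \<subseteq> Log_eq1 (UNIV :: real set)"
proof -
  have dim: "2 \<le> DIM(real ^ 'n)"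
    using assms by simp
  have "at_most_two_successors_fm \<in> Log_eq1 (UNIV :: real set)"
       "at_most_two_successors_fm \<notin> Log_eq1 (UNIV :: (real ^ 'n) set)"
    using at_most_two_successors_real not_at_most_two_successors_euclidean[OF dim]
    by (simp_all add: Log_eq1_def valid_at_most_two_successors_fm_iff)
  moreover have "edges_in_triangles_fm \<in> Log_eq1 (UNIV :: (real ^ 'n) set)"
       "edges_in_triangles_fm \<notin> Log_eq1 (UNIV :: real set)"
    using edges_in_triangles_euclidean[OF dim] not_edges_in_triangles_real
    by (simp_all add: Log_eq1_def valid_edges_in_triangles_fm_iff)
  ultimately show ?thesis
    by blast
qed

end
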